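(* Let $\varphi\in L^\infty(\mathbb{R})\cap S_0(\mathbb{R})$. Then for every $t>0$, $$\|\varphi\|_\infty\le\varphi^*(t)+2\,\omega(\varphi;t),\qquad\text{where }\ \omega(\varphi;t)=\sup_{0\le h\le t}\|\Delta_h\varphi\|_\infty.$$
   Context: $\|\cdot\|_\infty$ is the essential supremum norm on $\mathbb{R}$, and $\Delta_h\varphi(x)=\varphi(x+h)-\varphi(x)$. $S_0(\mathbb{R})$ is the class of measurable, a.e. finite functions $\varphi$ on $\mathbb{R}$ with $|\{x:|\varphi(x)|>s\}|<\infty$ for every $s>0$; $\varphi^*$ is the non-increasing rearrangement of $\varphi$ (the non-negative non-increasing function on $(0,\infty)$ equimeasurable with $|\varphi|$). *)

theory Defs
  imports "HOL-Probability.Essential_Supremum"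
begin

definition ess_norm :: "(real \<Rightarrow> real) \<Rightarrow> ereal" where
  "ess_norm \<phi> = esssup lebesgue (\<lambda>x. ereal \<bar>\<phi> x\<bar>)"

text \<open>The class S_0: measurable functions whose level sets {|phi| > s} have finite measure for s > 0.
  (Real-valued functions are automatically finite everywhere.)\<close>
definition S0 :: "(real \<Rightarrow> real) set" where
  "S0 = {\<phi>. \<phi> \<in> borel_measurable lebesgue \<and>
             (\<forall>s>0. emeasure lebesgue {x. s < \<bar>\<phi> x\<bar>} < \<infinity>)}"

definition Linf :: "(real \<Rightarrow> real) set" where
  "Linf = {\<phi>. \<phi> \<in> borel_measurable lebesgue \<and> ess_norm \<phi> < \<infinity>}"

definition rearr :: "(real \<Rightarrow> real) \<Rightarrow> real \<Rightarrow> real" where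
  "rearr \<phi> t = Inf {s. 0 \<le> s \<and> emeasure lebesgue {x. s < \<bar>\<phi> x\<bar>} \<le> ennreal t}"

definition diff_op :: "real \<Rightarrow> (real \<Rightarrow> real) \<Rightarrow> real \<Rightarrow> real" where
  "diff_op h \<phi> x = \<phi> (x + h) - \<phi> x"

definition modulus :: "(real \<Rightarrow> real) \<Rightarrow> real \<Rightarrow> ereal" where
  "modulus \<phi> t = (SUP h\<in>{0..t}. ess_norm (diff_op h \<phi>))"

end

theory Submission
  imports Defs
begin

text \<open>Suppose \<open>|\<phi>| > c\<close> on a set of positive measure, with \<open>c > \<phi>\<^sup>*(t) + 2\<omega>(\<phi>;t)\<close>.
  Increments of \<open>\<phi>\<close> over steps in \<open>[0,2t]\<close> are a.e. at most \<open>2\<omega>(\<phi>;t)\<close>, and by Fubini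
  there is a point \<open>x\<close> with \<open>|\<phi> x| > c\<close> such that this bound holds for almost every step
  \<open>h \<in> [0,2t]\<close> taken from \<open>x\<close>. Then \<open>|\<phi>| > c - 2\<omega>(\<phi>;t) > \<phi>\<^sup>*(t)\<close> a.e. on \<open>[x,x+2t]\<close>,
  a set of measure \<open>2t > t\<close>, contradicting the definition of \<open>\<phi>\<^sup>*(t)\<close>.\<close>

lemma AE_lborel_shift:
  assumes "AE y in lborel. Q y"
  shows "AE x in lborel. Q (x + (a::real))"
proof -
  from assms obtain N where N: "{y \<in> space lborel. \<not> Q y} \<subseteq> N" "emeasure lborel N = 0" "N \<in> sets lborel"
    by (auto elim!: AE_E)
  have "emeasure lborel (((+) a) -` N \<inter> space lborel) = emeasure (distr lborel borel ((+) a)) N"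
    using N(3) by (subst emeasure_distr) auto
  also have "\<dots> = 0" using N(2) by (simp add: lborel_distr_plus)
  finally have null: "emeasure lborel (((+) a) -` N) = 0" by simp
  have meas: "((+) a) -` N \<in> sets lborel"
    using N(3) measurable_sets[of "(+) a" borel borel N] by simp
  show ?thesis
    by (rule AE_I'[of "((+) a) -` N"]) (use meas null N(1) in \<open>auto simp: add.commute\<close>)
qed

lemma AE_abs_diff_le_double_step:
  fixes \<psi> :: "real \<Rightarrow> real"
  assumes incr: "\<And>h. h \<in> {0..a} \<Longrightarrow> AE x in lborel. \<bar>\<psi> (x + h) - \<psi> x\<bar> \<le> d"
    and h: "h \<in> {0..2*a}"
  shows "AE x in lborel. \<bar>\<psi> (x + h) - \<psi> x\<bar> \<le> 2 * d"
proof -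
  have half: "h/2 \<in> {0..a}" using h by auto
  have halves: "\<And>x. x + h/2 + h/2 = x + h" by simp
  show ?thesis
    using incr[OF half] AE_lborel_shift[OF incr[OF half], of "h/2"]
  proof eventually_elim
    case (elim x)
    then have "\<bar>\<psi> (x + h) - \<psi> (x + h/2)\<bar> \<le> d" by (simp only: halves)
    with elim(1) show ?case by (simp add: abs_le_iff)
  qed
qed

lemma emeasure_lborel_level_set_ge:
  fixes \<psi> :: "real \<Rightarrow> real"
  assumes \<psi>[measurable]: "\<psi> \<in> borel_measurable borel" and "0 \<le> a"
    and incr: "\<And>h. h \<in> {0..a} \<Longrightarrow> AE x in lborel. \<bar>\<psi> (x + h) - \<psi> x\<bar> \<le> d"
    and unbounded: "\<not> (AE x in lborel. \<bar>\<psi> x\<bar> \<le> c)"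
  shows "ennreal a \<le> emeasure lborel {y. c - d < \<bar>\<psi> y\<bar>}"
proof -
  let ?P = "\<lambda>x h. h \<in> {0..a} \<longrightarrow> \<bar>\<psi> (x + h) - \<psi> x\<bar> \<le> d"
  have meas: "{z \<in> space (lborel \<Otimes>\<^sub>M lborel). ?P (fst z) (snd z)} \<in> sets (lborel \<Otimes>\<^sub>M (lborel::real measure))"
    by measurable
  have "AE h in lborel. AE x in lborel. ?P x h"
  proof (rule AE_I2)
    show "AE x in lborel. ?P x h" for h
      by (cases "h \<in> {0..a}") (use incr in auto)
  qed
  then have "AE x in lborel. AE h in lborel. ?P x h"
    using lborel_pair.AE_commute[where P = ?P, OF meas] by blast
  then obtain x where x: "c < \<bar>\<psi> x\<bar>" "AE h in lborel. ?P x h"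
    using unbounded by (metis (mono_tags, lifting) eventually_mono not_le)
  from x(2) have "AE h in lborel. h \<in> {0..a} \<longrightarrow> c - d < \<bar>\<psi> (x + h)\<bar>"
    by eventually_elim (use x(1) in auto)
  from AE_lborel_shift[OF this, of "-x"]
  have "AE y in lborel. y \<in> {x..x+a} \<longrightarrow> y \<in> {y. c - d < \<bar>\<psi> y\<bar>}"
    by (auto elim!: eventually_mono)
  then have "emeasure lborel {x..x+a} \<le> emeasure lborel {y. c - d < \<bar>\<psi> y\<bar>}"
    by (rule emeasure_mono_AE) measurable
  then show ?thesis using \<open>0 \<le> a\<close> by simp
qed

lemma sets_lebesgue_level_set:
  fixes \<phi> :: "real \<Rightarrow> real"
  assumes "\<phi> \<in> borel_measurable lebesgue"
  shows "{x. r < \<bar>\<phi> x\<bar>} \<in> sets lebesgue"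
proof -
  have "{y. r < \<bar>y\<bar>} \<in> sets borel" by measurable
  from measurable_sets[OF assms this] show ?thesis by (simp add: vimage_def)
qed

lemma emeasure_lebesgue_level_set_ge:
  fixes \<phi> :: "real \<Rightarrow> real"
  assumes \<phi>: "\<phi> \<in> borel_measurable lebesgue" and "0 \<le> a"
    and incr: "\<And>h. h \<in> {0..a} \<Longrightarrow> AE x in lebesgue. \<bar>\<phi> (x + h) - \<phi> x\<bar> \<le> d"
    and unbounded: "\<not> (AE x in lebesgue. \<bar>\<phi> x\<bar> \<le> c)"
  shows "ennreal a \<le> emeasure lebesgue {y. c - d < \<bar>\<phi> y\<bar>}"
proof -
  obtain \<psi> where \<psi>: "\<psi> \<in> borel_measurable lborel" and eq: "AE x in lborel. \<phi> x = \<psi> x"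
    using completion_ex_borel_measurable_real[OF \<phi>] by blast
  have \<psi>m[measurable]: "\<psi> \<in> borel_measurable borel" using \<psi> by simp
  have "ennreal a \<le> emeasure lborel {y. c - d < \<bar>\<psi> y\<bar>}"
  proof (rule emeasure_lborel_level_set_ge[OF \<psi>m \<open>0 \<le> a\<close>])
    show "AE x in lborel. \<bar>\<psi> (x + h) - \<psi> x\<bar> \<le> d" if "h \<in> {0..a}" for h
    proof -
      from incr[OF that] have "AE x in lborel. \<bar>\<phi> (x + h) - \<phi> x\<bar> \<le> d"
        by (simp add: AE_completion_iff)
      from this eq AE_lborel_shift[OF eq, of h] show ?thesis
        by eventually_elim auto
    qed
    show "\<not> (AE x in lborel. \<bar>\<psi> x\<bar> \<le> c)"
    proof
      assume "AE x in lborel. \<bar>\<psi> x\<bar> \<le> c"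
      with eq have "AE x in lborel. \<bar>\<phi> x\<bar> \<le> c" by eventually_elim auto
      with unbounded show False by (simp add: AE_completion_iff)
    qed
  qed
  also have "\<dots> = emeasure lebesgue {y. c - d < \<bar>\<psi> y\<bar>}"
  proof -
    have "{y. c - d < \<bar>\<psi> y\<bar>} \<in> sets borel" by measurable
    then show ?thesis by simp
  qed
  also have "\<dots> = emeasure lebesgue {y. c - d < \<bar>\<phi> y\<bar>}"
  proof (rule emeasure_eq_AE)
    show "AE x in lebesgue. x \<in> {y. c - d < \<bar>\<psi> y\<bar>} \<longleftrightarrow> x \<in> {y. c - d < \<bar>\<phi> y\<bar>}"
      unfolding AE_completion_iff using eq by eventually_elim auto
  qed (fact sets_lebesgue_level_set[OF measurable_completion[OF \<psi>]] sets_lebesgue_level_set[OF \<phi>])+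
  finally show ?thesis .
qed

lemma AE_abs_le_ess_norm: "AE x in lebesgue. ereal \<bar>\<phi> x\<bar> \<le> ess_norm \<phi>"
  unfolding ess_norm_def by (rule esssup_AE)

lemma ess_norm_le_if_AE:
  assumes "\<phi> \<in> borel_measurable lebesgue" and "AE x in lebesgue. \<bar>\<phi> x\<bar> \<le> c"
  shows "ess_norm \<phi> \<le> ereal c"
  unfolding ess_norm_def using assms by (intro esssup_I) (auto elim: eventually_mono)

lemma emeasure_level_set_le_if_rearr_less:
  assumes "\<phi> \<in> Linf" and "rearr \<phi> t < r"
  shows "emeasure lebesgue {x. r < \<bar>\<phi> x\<bar>} \<le> ennreal t"
proof -
  define S where "S = {s. 0 \<le> s \<and> emeasure lebesgue {x. s < \<bar>\<phi> x\<bar>} \<le> ennreal t}"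
  have \<phi>: "\<phi> \<in> borel_measurable lebesgue" using assms(1) by (simp add: Linf_def)
  obtain M where M: "ess_norm \<phi> \<le> ereal M"
    using assms(1) by (cases "ess_norm \<phi>") (auto simp: Linf_def)
  have "AE y in lebesgue. \<not> (max M 0 < \<bar>\<phi> y\<bar>)"
    using AE_abs_le_ess_norm[of \<phi>]
    by eventually_elim (metis M ereal_less_eq(3) le_max_iff_disj not_le order_trans)
  then have "emeasure lebesgue {y \<in> space lebesgue. max M 0 < \<bar>\<phi> y\<bar>} = 0"
    by (rule emeasure_eq_0_AE)
  then have "max M 0 \<in> S" unfolding S_def by simp
  moreover have "Inf S < r" using assms(2) by (simp add: rearr_def S_def)
  ultimately obtain s where s: "s \<in> S" "s < r" using cInf_lessD by blast
  have "emeasure lebesgue {x. r < \<bar>\<phi> x\<bar>} \<le> emeasure lebesgue {x. s < \<bar>\<phi> x\<bar>}"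
    by (rule emeasure_mono) (use s(2) sets_lebesgue_level_set[OF \<phi>] in auto)
  also have "\<dots> \<le> ennreal t" using s(1) by (simp add: S_def)
  finally show ?thesis .
qed

lemma modulus_nonneg:
  assumes "0 \<le> t"
  shows "0 \<le> modulus \<phi> t"
proof -
  have "ess_norm (diff_op 0 \<phi>) = 0"
    using esssup_const[of lebesgue "ereal 0"] by (simp add: ess_norm_def diff_op_def zero_ereal_def)
  then show ?thesis
    using assms SUP_upper[of 0 "{0..t}" "\<lambda>h. ess_norm (diff_op h \<phi>)"] by (simp add: modulus_def)
qed

lemma AE_abs_diff_le_modulus:
  assumes "h \<in> {0..t}" and "modulus \<phi> t = ereal w"
  shows "AE x in lebesgue. \<bar>\<phi> (x + h) - \<phi> x\<bar> \<le> w"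
proof -
  have le: "ess_norm (diff_op h \<phi>) \<le> ereal w"
    using assms SUP_upper[of h "{0..t}" "\<lambda>h. ess_norm (diff_op h \<phi>)"] by (simp add: modulus_def)
  show ?thesis
    using AE_abs_le_ess_norm[of "diff_op h \<phi>"]
    by eventually_elim (metis le diff_op_def ereal_less_eq(3) order_trans)
qed

lemma AE_abs_diff_le_twice_modulus:
  assumes "h \<in> {0..2*t}" and "modulus \<phi> t = ereal w"
  shows "AE x in lebesgue. \<bar>\<phi> (x + h) - \<phi> x\<bar> \<le> 2 * w"
proof -
  have "AE x in lborel. \<bar>\<phi> (x + h) - \<phi> x\<bar> \<le> 2 * w"
  proof (rule AE_abs_diff_le_double_step[OF _ assms(1)])
    show "AE x in lborel. \<bar>\<phi> (x + h') - \<phi> x\<bar> \<le> w" if "h' \<in> {0..t}" for h'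
      using AE_abs_diff_le_modulus[OF that assms(2)] by (simp add: AE_completion_iff)
  qed
  then show ?thesis by (simp add: AE_completion_iff)
qed

lemma ess_norm_le_rearr_add:
  assumes \<phi>: "\<phi> \<in> Linf" and "0 < t"
    and incr: "\<And>h. h \<in> {0..2*t} \<Longrightarrow> AE x in lebesgue. \<bar>\<phi> (x + h) - \<phi> x\<bar> \<le> d"
  shows "ess_norm \<phi> \<le> ereal (rearr \<phi> t + d)"
proof (rule ccontr)
  assume "\<not> ?thesis"
  then have "ereal (rearr \<phi> t + d) < ess_norm \<phi>" by (simp add: not_le)
  then obtain z where "ereal (rearr \<phi> t + d) < z" "z < ess_norm \<phi>"
    using ereal_dense2 by blast
  then obtain c where c: "rearr \<phi> t + d < c" "ereal c < ess_norm \<phi>"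
    by (cases z) auto
  have \<phi>m: "\<phi> \<in> borel_measurable lebesgue" using \<phi> by (simp add: Linf_def)
  have "\<not> (AE x in lebesgue. \<bar>\<phi> x\<bar> \<le> c)"
  proof
    assume "AE x in lebesgue. \<bar>\<phi> x\<bar> \<le> c"
    then have "ess_norm \<phi> \<le> ereal c" by (rule ess_norm_le_if_AE[OF \<phi>m])
    with c(2) show False by simp
  qed
  then have "ennreal (2 * t) \<le> emeasure lebesgue {y. c - d < \<bar>\<phi> y\<bar>}"
    using emeasure_lebesgue_level_set_ge[OF \<phi>m _ incr] \<open>0 < t\<close> by simp
  also have "\<dots> \<le> ennreal t"
    using emeasure_level_set_le_if_rearr_less[OF \<phi>, of t "c - d"] c(1) by simp
  finally show False using \<open>0 < t\<close> by simp
qed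

theorem mainTheorem7:
  fixes \<phi> :: "real \<Rightarrow> real" and t :: real
  assumes "\<phi> \<in> Linf" and "\<phi> \<in> S0" and "t > 0"
  shows "ess_norm \<phi> \<le> ereal (rearr \<phi> t) + 2 * modulus \<phi> t"
proof (cases "modulus \<phi> t")
  case (real w)
  have "ess_norm \<phi> \<le> ereal (rearr \<phi> t + 2 * w)"
    using ess_norm_le_rearr_add[OF assms(1,3) AE_abs_diff_le_twice_modulus[OF _ real]] .
  then show ?thesis using real by simp
next
  case PInf
  then show ?thesis by simp
next
  case MInf
  then show ?thesis using modulus_nonneg[of t \<phi>] assms(3) by simp
qed

end
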